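(* Let $G$ be a compact Hausdorff abelian group with Haar probability measure $\mu$, and let $B$ be a $K$-analytic subset of $G$. Then for all non-negative integers $m,n$ we have \[\mu(mB-nB)=\sup_{D\subset B,\ D\text{ compact}}\mu(mD-nD).\]
   Context: A subset $S$ of a topological space $Y$ is a $K_{\sigma\delta}$ set if $S=\bigcap_{i\in\mathbb{N}}\bigcup_{j\in\mathbb{N}}K_{i,j}$ for compact sets $K_{i,j}\subset Y$. A subset $A$ of a Hausdorff space $X$ is $K$-analytic if there is a $K_{\sigma\delta}$ set $S$ in some Hausdorff space and a continuous map $f:S\to X$ with $A=f(S)$ ($K$-analytic subsets of $G$ are Haar measurable, and sums/differences of $K$-analytic sets are $K$-analytic). $mB-nB=\{b_1+\dots+b_m-b_1'-\dots-b_n':b_i,b_j'\in B\}$, with an empty sum equal to $0$. *)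

theory Defs
  imports "HOL-Probability.Probability"
begin

text \<open>Haar probability measure on a compact Hausdorff abelian group (the type 'a with its
  topology): a translation-invariant Radon (outer regular on Borel sets, inner regular by
  compacts on open sets) Borel probability measure.\<close>
definition haar_prob :: "('a::{topological_ab_group_add, t2_space}) measure \<Rightarrow> bool" where
  "haar_prob M \<longleftrightarrow>
     space M = UNIV \<and> sets M = sets borel \<and> prob_space M \<and>
     (\<forall>A \<in> sets borel. \<forall>x. emeasure M ((\<lambda>y. x + y) ` A) = emeasure M A) \<and>
     (\<forall>A \<in> sets borel. emeasure M A = (INF U \<in> {U. open U \<and> A \<subseteq> U}. emeasure M U)) \<and>
     (\<forall>U. open U \<longrightarrow> emeasure M U = (SUP K \<in> {K. compact K \<and> K \<subseteq> U}. emeasure M K))"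

definition Ksd_set :: "'b topology \<Rightarrow> 'b set \<Rightarrow> bool" where
  "Ksd_set Y S \<longleftrightarrow> (\<exists>K :: nat \<Rightarrow> nat \<Rightarrow> 'b set.
      (\<forall>i j. compactin Y (K i j)) \<and> S = (\<Inter>i. \<Union>j. K i j))"

definition K_analytic_via :: "'b topology \<Rightarrow> ('a::topological_space) set \<Rightarrow> bool" where
  "K_analytic_via Y A \<longleftrightarrow> Hausdorff_space Y \<and> (\<exists>S f.
      Ksd_set Y S \<and> continuous_map (subtopology Y S) euclidean f \<and> f ` S = A)"

definition sumset :: "nat \<Rightarrow> ('a::comm_monoid_add) set \<Rightarrow> 'a set" where
  "sumset m B = {(\<Sum>i<m. b i) | b. \<forall>i<m. b i \<in> B}"

definition diffset :: "nat \<Rightarrow> nat \<Rightarrow> ('a::ab_group_add) set \<Rightarrow> 'a set" where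
  "diffset m n B = {x - y | x y. x \<in> sumset m B \<and> y \<in> sumset n B}"

end

theory Submission
  imports Defs
begin

text \<open>
  Write \<open>B = f(S)\<close> with \<open>S\<close> a \<open>K\<^sub>\<sigma>\<^sub>\<delta>\<close> set. Then \<open>mB - nB\<close> is the image of the
  \<open>K\<^sub>\<sigma>\<^sub>\<delta>\<close> set \<open>S\<^sup>m\<^sup>+\<^sup>n\<close> under the continuous map
  \<open>x \<mapsto> f(x\<^sub>1) + \<dots> + f(x\<^sub>m) - f(x\<^sub>m\<^sub>+\<^sub>1) - \<dots> - f(x\<^sub>m\<^sub>+\<^sub>n)\<close>.
  Continuous images of \<open>K\<^sub>\<sigma>\<^sub>\<delta>\<close> sets are capacitable for an outer regular finite
  measure: if the outer measure of \<open>F(T)\<close> exceeds \<open>r\<close>, choosing one compact piece of each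
  countable union in turn (using continuity of the outer measure along increasing unions) yields
  a decreasing sequence of compacts whose intersection \<open>L \<subseteq> T\<close> satisfies \<open>\<mu>(F(L)) \<ge> r\<close>.
  The images of \<open>L\<close> under the coordinate maps give a compact \<open>D \<subseteq> B\<close> with
  \<open>F(L) \<subseteq> mD - nD\<close>. Hence \<open>mB - nB\<close> is inner approximated by the compact sets
  \<open>mD - nD\<close>; together with a measurable hull this makes it measurable for the completion
  of \<open>\<mu>\<close>, with measure the supremum of these inner approximations.
\<close>

definition diffset_sum :: "nat \<Rightarrow> nat \<Rightarrow> (nat \<Rightarrow> 'a::ab_group_add) \<Rightarrow> 'a" where
  "diffset_sum m n x = (\<Sum>i<m. x i) - (\<Sum>i<n. x (m + i))"

lemma diffset_sum_cong: "(\<And>l. l < m + n \<Longrightarrow> x l = y l) \<Longrightarrow> diffset_sum m n x = diffset_sum m n y"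
  unfolding diffset_sum_def by (intro arg_cong2[where f="(-)"] sum.cong) auto

lemma diffset_sum_in_diffset:
  assumes "\<And>l. l < m + n \<Longrightarrow> x l \<in> X"
  shows "diffset_sum m n x \<in> diffset m n X"
proof -
  have "(\<Sum>i<m. x i) \<in> sumset m X"
    unfolding sumset_def using assms by auto
  moreover have "(\<Sum>i<n. x (m + i)) \<in> sumset n X"
    unfolding sumset_def using assms by (auto intro!: exI[of _ "\<lambda>i. x (m + i)"])
  ultimately show ?thesis unfolding diffset_sum_def diffset_def by blast
qed

lemma diffset_eq_image: "diffset m n X = diffset_sum m n ` PiE {..<m+n} (\<lambda>_. X)"
proof
  show "diffset m n X \<subseteq> diffset_sum m n ` PiE {..<m+n} (\<lambda>_. X)"
  proof
    fix z assume "z \<in> diffset m n X"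
    then obtain b b' where b: "\<forall>i<m. b i \<in> X" "\<forall>i<n. b' i \<in> X"
      and z: "z = (\<Sum>i<m. b i) - (\<Sum>i<n. b' i)"
      unfolding diffset_def sumset_def by blast
    define w where "w = restrict (\<lambda>l. if l < m then b l else b' (l - m)) {..<m+n}"
    have "w \<in> PiE {..<m+n} (\<lambda>_. X)" using b unfolding w_def by (auto simp: PiE_iff)
    moreover have "diffset_sum m n w = z" unfolding z diffset_sum_def w_def
      by (intro arg_cong2[where f="(-)"] sum.cong) auto
    ultimately show "z \<in> diffset_sum m n ` PiE {..<m+n} (\<lambda>_. X)" by blast
  qed
next
  show "diffset_sum m n ` PiE {..<m+n} (\<lambda>_. X) \<subseteq> diffset m n X"
    by (rule image_subsetI, rule diffset_sum_in_diffset) (simp add: PiE_iff)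
qed

lemma diffset_mono: "D \<subseteq> B \<Longrightarrow> diffset m n D \<subseteq> diffset m n B"
  unfolding diffset_eq_image by (intro image_mono PiE_mono) auto

lemma PiE_const_image: "PiE I (\<lambda>_. f ` S) = (\<lambda>x. restrict (f \<circ> x) I) ` PiE I (\<lambda>_. S)"
proof
  show "PiE I (\<lambda>_. f ` S) \<subseteq> (\<lambda>x. restrict (f \<circ> x) I) ` PiE I (\<lambda>_. S)"
  proof
    fix y assume y: "y \<in> PiE I (\<lambda>_. f ` S)"
    have "\<forall>i\<in>I. \<exists>s. s \<in> S \<and> f s = y i"
    proof
      fix i assume "i \<in> I"
      then have "y i \<in> f ` S" by (rule PiE_mem[OF y])
      then show "\<exists>s. s \<in> S \<and> f s = y i" by (auto simp: image_iff)
    qed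
    then obtain g where g: "\<forall>i\<in>I. g i \<in> S \<and> f (g i) = y i"
      by (rule bchoice[THEN exE])
    have "y = restrict (f \<circ> restrict g I) I"
    proof
      fix i show "y i = restrict (f \<circ> restrict g I) I i"
        using g PiE_arb[OF y, of i] by (cases "i \<in> I") auto
    qed
    moreover have "restrict g I \<in> PiE I (\<lambda>_. S)" using g by simp
    ultimately show "y \<in> (\<lambda>x. restrict (f \<circ> x) I) ` PiE I (\<lambda>_. S)" by blast
  qed
next
  show "(\<lambda>x. restrict (f \<circ> x) I) ` PiE I (\<lambda>_. S) \<subseteq> PiE I (\<lambda>_. f ` S)"
    by (rule image_subsetI) (auto simp: PiE_iff)
qed

lemma diffset_image: "diffset m n (f ` S) = (\<lambda>x. diffset_sum m n (f \<circ> x)) ` PiE {..<m+n} (\<lambda>_. S)"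
  unfolding diffset_eq_image PiE_const_image image_image
  by (intro image_cong refl diffset_sum_cong) simp

lemma continuous_map_diffset_sum:
  fixes x :: "'c \<Rightarrow> nat \<Rightarrow> 'a::topological_ab_group_add"
  assumes "\<And>l. l < m + n \<Longrightarrow> continuous_map X euclidean (\<lambda>z. x z l)"
  shows "continuous_map X euclidean (\<lambda>z. diffset_sum m n (x z))"
  using assms unfolding diffset_sum_def continuous_map_atin
  by (auto intro!: tendsto_diff tendsto_sum)

lemma compact_diffset:
  fixes D :: "'a::topological_ab_group_add set"
  assumes "compact D"
  shows "compact (diffset m n D)"
proof -
  let ?Z = "product_topology (\<lambda>_. euclidean) {..<m+n} :: (nat \<Rightarrow> 'a) topology"
  have "continuous_map ?Z euclidean (\<lambda>z. z l)" if "l < m + n" for l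
    using continuous_map_product_projection[of l "{..<m+n}" "\<lambda>_. euclidean"] that by simp
  from continuous_map_diffset_sum[of m n _ "\<lambda>x. x", OF this]
  have "continuous_map ?Z euclidean (diffset_sum m n)" by simp
  moreover have "compactin ?Z (PiE {..<m+n} (\<lambda>_. D))"
    using assms by (simp add: compactin_PiE)
  ultimately have "compactin euclidean (diffset_sum m n ` PiE {..<m+n} (\<lambda>_. D))"
    by (rule image_compactin[rotated])
  then show ?thesis by (simp add: diffset_eq_image)
qed

lemma Ksd_set_incseq:
  fixes Y :: "'b topology"
  assumes "Ksd_set Y S"
  obtains K :: "nat \<Rightarrow> nat \<Rightarrow> 'b set"
  where "\<And>i j. compactin Y (K i j)" "\<And>i. incseq (K i)" "S = (\<Inter>i. \<Union>j. K i j)"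
proof -
  obtain K :: "nat \<Rightarrow> nat \<Rightarrow> 'b set" where K: "\<And>i j. compactin Y (K i j)" and S: "S = (\<Inter>i. \<Union>j. K i j)"
    using assms unfolding Ksd_set_def by blast
  define K' where "K' i j = \<Union>(K i ` {..j})" for i j
  have "compactin Y (K' i j)" for i j
    unfolding K'_def by (intro compactin_Union) (auto simp: K)
  moreover have "incseq (K' i)" for i
    unfolding K'_def incseq_def by (intro allI impI Union_mono image_mono) auto
  moreover have "(\<Union>j. K' i j) = (\<Union>j. K i j)" for i
    unfolding K'_def by auto
  then have "S = (\<Inter>i. \<Union>j. K' i j)" by (simp add: S)
  ultimately show thesis by (rule that)
qed

lemma PiE_Inter_Union_incseq:
  assumes "finite I" and "\<And>i. incseq (K i)"
  shows "PiE I (\<lambda>_. \<Inter>i. \<Union>j. K i j) = (\<Inter>i. \<Union>j. PiE I (\<lambda>_. K i j))"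
proof (intro equalityI subsetI INT_I)
  fix x i assume x: "x \<in> PiE I (\<lambda>_. \<Inter>i. \<Union>j. K i j)"
  then have "\<forall>l\<in>I. \<exists>j. x l \<in> K i j" by (auto simp: PiE_iff)
  then obtain jl where jl: "\<forall>l\<in>I. x l \<in> K i (jl l)"
    by (rule bchoice[THEN exE])
  define J where "J = Max (insert 0 (jl ` I))"
  have "x l \<in> K i J" if "l \<in> I" for l
  proof -
    have "jl l \<le> J" unfolding J_def using \<open>finite I\<close> that by simp
    then show ?thesis using jl that incseqD[OF assms(2)] by blast
  qed
  then have "x \<in> PiE I (\<lambda>_. K i J)" using x by (simp add: PiE_iff)
  then show "x \<in> (\<Union>j. PiE I (\<lambda>_. K i j))" by blast
next
  fix x assume x: "x \<in> (\<Inter>i. \<Union>j. PiE I (\<lambda>_. K i j))"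
  have "\<exists>j. x \<in> PiE I (\<lambda>_. K i j)" for i
    using INT_D[OF x UNIV_I] by blast
  then obtain J where J: "x \<in> PiE I (\<lambda>_. K i (J i))" for i by metis
  have "x l \<in> (\<Inter>i. \<Union>j. K i j)" if "l \<in> I" for l
    using PiE_mem[OF J that] by blast
  moreover have "x \<in> extensional I" using J[of undefined] by (simp add: PiE_iff)
  ultimately show "x \<in> PiE I (\<lambda>_. \<Inter>i. \<Union>j. K i j)" by (simp add: PiE_iff)
qed

lemma Ksd_set_PiE:
  fixes Y :: "'b topology"
  assumes "finite I" and "Ksd_set Y S"
  shows "Ksd_set (product_topology (\<lambda>_. Y) I) (PiE I (\<lambda>_. S))"
proof -
  obtain K :: "nat \<Rightarrow> nat \<Rightarrow> 'b set"
    where "\<And>i j. compactin Y (K i j)" "\<And>i. incseq (K i)" "S = (\<Inter>i. \<Union>j. K i j)"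
    using Ksd_set_incseq[OF assms(2)] by blast
  then show ?thesis
    unfolding Ksd_set_def using assms(1)
    by (intro exI[of _ "\<lambda>i j. PiE I (\<lambda>_. K i j)"]) (simp add: compactin_PiE PiE_Inter_Union_incseq)
qed

lemma continuous_map_PiE_component:
  assumes "l \<in> I" and f: "continuous_map (subtopology Y S) X f"
  shows "continuous_map (subtopology (product_topology (\<lambda>_. Y) I) (PiE I (\<lambda>_. S))) X (\<lambda>x. f (x l))"
proof -
  let ?T = "subtopology (product_topology (\<lambda>_. Y) I) (PiE I (\<lambda>_. S))"
  have "continuous_map (product_topology (\<lambda>_. Y) I) Y (\<lambda>x. x l)"
    using continuous_map_product_projection[of l I "\<lambda>_. Y"] assms(1) by simp
  then have "continuous_map ?T Y (\<lambda>x. x l)" by (rule continuous_map_from_subtopology)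
  moreover have "(\<lambda>x. x l) ` topspace ?T \<subseteq> S" using assms(1) by (auto simp: PiE_iff)
  ultimately have "continuous_map ?T (subtopology Y S) (\<lambda>x. x l)"
    by (simp add: continuous_map_in_subtopology image_subset_iff_funcset)
  from continuous_map_compose[OF this f] show ?thesis by (simp add: o_def)
qed

lemma compactin_decseq_subset_openin:
  assumes "compactin Z (M 0)" and "\<And>k. closedin Z (M k)" and "decseq M"
    and "openin Z V" and "(\<Inter>k. M k) \<subseteq> V"
  obtains k where "M k \<subseteq> V"
proof (rule ccontr)
  assume "\<not> thesis"
  then have nonempty: "M k - V \<noteq> {}" for k using that by auto
  have closed: "closedin (subtopology Z (M 0)) (M k - V)" for k
  proof (rule closedin_subset_topspace)
    show "closedin Z (M k - V)" using assms(2,4) by (rule closedin_diff)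
    show "M k - V \<subseteq> M 0" using decseqD[OF assms(3), of 0 k] by auto
  qed
  have dec: "decseq (\<lambda>k. M k - V)"
  proof (rule decseq_SucI)
    show "M (Suc k) - V \<subseteq> M k - V" for k
      using decseqD[OF assms(3), of k "Suc k"] by auto
  qed
  have "(\<Inter>k. M k - V) \<noteq> {}"
    using compact_space_imp_nest[of "subtopology Z (M 0)" "\<lambda>k. M k - V",
        OF compact_space_subtopology[OF assms(1)] closed nonempty dec] .
  moreover have "(\<Inter>k. M k - V) = {}" using assms(5) by auto
  ultimately show False by contradiction
qed

lemma image_decseq_subset_open:
  assumes "compactin Z (M 0)" and "\<And>k. closedin Z (M k)" and "decseq M"
    and "(\<Inter>k. M k) \<subseteq> T" and F: "continuous_map (subtopology Z T) euclidean F"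
    and "open U" and "F ` (\<Inter>k. M k) \<subseteq> U"
  obtains k where "F ` (T \<inter> M k) \<subseteq> U"
proof -
  have "openin (subtopology Z T) {z \<in> topspace (subtopology Z T). F z \<in> U}"
    using openin_continuous_map_preimage[OF F] \<open>open U\<close> by simp
  then obtain V where V: "openin Z V" and eq: "{z \<in> topspace Z \<inter> T. F z \<in> U} = V \<inter> T"
    unfolding openin_subtopology by auto
  have "(\<Inter>k. M k) \<subseteq> {z \<in> topspace Z \<inter> T. F z \<in> U}"
    using assms(4,7) compactin_subset_topspace[OF assms(1)] by auto
  then have "(\<Inter>k. M k) \<subseteq> V" unfolding eq by auto
  then obtain k where "M k \<subseteq> V"
    using compactin_decseq_subset_openin[OF assms(1-3) V] by auto
  then have "T \<inter> M k \<subseteq> {z \<in> topspace Z \<inter> T. F z \<in> U}" unfolding eq by auto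
  then have "F ` (T \<inter> M k) \<subseteq> U" by auto
  then show thesis by (rule that)
qed

lemma outer_measure_of_image_incseq_less:
  assumes "incseq C" and "A \<subseteq> (\<Union>j. C j)" and "F ` A \<subseteq> space \<mu>"
    and "r < outer_measure_of \<mu> (F ` A)"
  obtains j where "r < outer_measure_of \<mu> (F ` (A \<inter> C j))"
proof -
  have "A = (\<Union>j. A \<inter> C j)" using assms(2) by auto
  then have "F ` A = F ` (\<Union>j. A \<inter> C j)" by (rule arg_cong[where f="image F"])
  also have "\<dots> = (\<Union>j. F ` (A \<inter> C j))" by (rule image_UN)
  finally have image_eq: "F ` A = (\<Union>j. F ` (A \<inter> C j))" .
  have "incseq (\<lambda>j. F ` (A \<inter> C j))"
  proof (rule incseq_SucI)
    show "F ` (A \<inter> C j) \<subseteq> F ` (A \<inter> C (Suc j))" for j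
      using incseqD[OF assms(1), of j "Suc j"] by auto
  qed
  then have "(SUP j. outer_measure_of \<mu> (F ` (A \<inter> C j))) = outer_measure_of \<mu> (F ` A)"
    unfolding image_eq using assms(3) by (intro SUP_outer_measure_of_incseq) auto
  with assms(4) have "r < (SUP j. outer_measure_of \<mu> (F ` (A \<inter> C j)))" by simp
  then show thesis using that by (auto simp: less_SUP_iff)
qed

lemma Ksd_image_inner_compact:
  fixes F :: "'c \<Rightarrow> 'a::t2_space" and \<mu> :: "'a measure"
  assumes Z: "Hausdorff_space Z" and T: "Ksd_set Z T"
    and F: "continuous_map (subtopology Z T) euclidean F"
    and sets: "sets \<mu> = sets borel"
    and outer: "\<And>K. compact K \<Longrightarrow> emeasure \<mu> K = (INF U \<in> {U. open U \<and> K \<subseteq> U}. emeasure \<mu> U)"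
    and r: "r < outer_measure_of \<mu> (F ` T)"
  obtains L where "compactin Z L" "L \<subseteq> T" "r \<le> emeasure \<mu> (F ` L)"
proof -
  obtain C :: "nat \<Rightarrow> nat \<Rightarrow> 'c set"
    where C: "\<And>i j. compactin Z (C i j)" "\<And>i. incseq (C i)" and T_eq: "T = (\<Inter>i. \<Union>j. C i j)"
    using Ksd_set_incseq[OF T] by blast
  have T_sub: "T \<subseteq> (\<Union>j. C i j)" for i unfolding T_eq by blast
  have space: "F ` A \<subseteq> space \<mu>" for A using sets_eq_imp_space_eq[OF sets] by simp
  \<comment> \<open>Invariant of the construction: \<open>M\<^sub>k\<close> is a compact piece of the \<open>k\<close>-th union that still carries
    outer measure \<open>> r\<close> of the image.\<close>
  define P where "P k M \<longleftrightarrow> compactin Z M \<and> (\<exists>j. M \<subseteq> C k j) \<and> r < outer_measure_of \<mu> (F ` (T \<inter> M))"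
    for k M
  have start: "\<exists>M. P 0 M"
  proof -
    obtain j where "r < outer_measure_of \<mu> (F ` (T \<inter> C 0 j))"
      by (rule outer_measure_of_image_incseq_less[OF C(2) T_sub space r])
    then have "P 0 (C 0 j)" unfolding P_def using C(1) by auto
    then show ?thesis ..
  qed
  have step: "\<exists>M'. P (Suc k) M' \<and> M' \<subseteq> M" if M: "P k M" for k M
  proof -
    have "T \<inter> M \<subseteq> (\<Union>j. C (Suc k) j)" using T_sub by blast
    moreover have "r < outer_measure_of \<mu> (F ` (T \<inter> M))" using M unfolding P_def by blast
    ultimately obtain j where j: "r < outer_measure_of \<mu> (F ` (T \<inter> M \<inter> C (Suc k) j))"
      by (rule outer_measure_of_image_incseq_less[OF C(2) _ space])
    have "compactin Z (M \<inter> C (Suc k) j)"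
      using M compact_Int_closedin compactin_imp_closedin[OF Z C(1)] unfolding P_def by blast
    with j have "P (Suc k) (M \<inter> C (Suc k) j)" unfolding P_def by (auto simp: Int_assoc)
    then show ?thesis by blast
  qed
  obtain M where M: "\<And>k. P k (M k)" "\<And>k. M (Suc k) \<subseteq> M k"
    using dependent_nat_choice[of P "\<lambda>_ M M'. M' \<subseteq> M", OF start step] by blast
  have closed: "closedin Z (M k)" for k
    using M(1)[of k] unfolding P_def by (simp add: compactin_imp_closedin[OF Z])
  have M0: "compactin Z (M 0)" using M(1)[of 0] unfolding P_def by simp
  have dec: "decseq M" using M(2) by (simp add: decseq_SucI)
  define L where "L = (\<Inter>k. M k)"
  have L: "compactin Z L"
    unfolding L_def by (rule closed_compactin_Inter[OF M0]) (auto simp: closed)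
  have "M i \<subseteq> (\<Union>j. C i j)" for i using M(1)[of i] unfolding P_def by auto
  then have LT: "L \<subseteq> T" unfolding L_def T_eq by auto
  have "compact (F ` L)"
    using image_compactin[OF _ F, of L] L LT by (simp add: compactin_subtopology)
  have "r \<le> emeasure \<mu> U" if U: "open U" "F ` L \<subseteq> U" for U
  proof -
    obtain k where k: "F ` (T \<inter> M k) \<subseteq> U"
      by (rule image_decseq_subset_open[OF M0 closed dec LT[unfolded L_def] F U(1) U(2)[unfolded L_def]])
    have "r < outer_measure_of \<mu> (F ` (T \<inter> M k))" using M(1)[of k] unfolding P_def by blast
    also have "\<dots> \<le> outer_measure_of \<mu> U" using k by (rule outer_measure_of_mono)
    also have "\<dots> = emeasure \<mu> U" using sets U(1) by simp
    finally show ?thesis by simp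
  qed
  then have "r \<le> (INF U \<in> {U. open U \<and> F ` L \<subseteq> U}. emeasure \<mu> U)" by (auto intro: INF_greatest)
  then have "r \<le> emeasure \<mu> (F ` L)" using outer[OF \<open>compact (F ` L)\<close>] by simp
  with L LT show thesis by (rule that)
qed

lemma measurable_kernel_attain:
  assumes inner: "\<And>r. r < outer_measure_of \<mu> A \<Longrightarrow> \<exists>C \<in> sets \<mu>. C \<subseteq> A \<and> r \<le> emeasure \<mu> C"
  obtains C where "C \<in> sets \<mu>" "C \<subseteq> A" "emeasure \<mu> C = outer_measure_of \<mu> A"
proof -
  let ?S = "emeasure \<mu> ` {C \<in> sets \<mu>. C \<subseteq> A}"
  have "emeasure \<mu> {} \<in> ?S" by (intro imageI) auto
  then obtain f :: "nat \<Rightarrow> ennreal" where f: "range f \<subseteq> ?S" "Sup ?S = (SUP i. f i)"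
    using ennreal_Sup_countable_SUP[of ?S] by blast
  have "\<exists>C. C \<in> sets \<mu> \<and> C \<subseteq> A \<and> f i = emeasure \<mu> C" for i
  proof -
    have "f i \<in> ?S" using f(1) by (rule range_subsetD)
    then show ?thesis by auto
  qed
  then obtain Cs where Cs: "\<And>i. Cs i \<in> sets \<mu>" "\<And>i. Cs i \<subseteq> A" "\<And>i. f i = emeasure \<mu> (Cs i)"
    by metis
  define C where "C = (\<Union>i. Cs i)"
  have C: "C \<in> sets \<mu>" "C \<subseteq> A" using Cs unfolding C_def by auto
  have "outer_measure_of \<mu> A \<le> Sup ?S"
  proof (rule dense_le)
    fix r assume "r < outer_measure_of \<mu> A"
    then obtain D where D: "D \<in> sets \<mu>" "D \<subseteq> A" "r \<le> emeasure \<mu> D" using inner by blast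
    then have "emeasure \<mu> D \<in> ?S" by auto
    then show "r \<le> Sup ?S" using D(3) by (rule Sup_upper2)
  qed
  also have "\<dots> \<le> emeasure \<mu> C"
    unfolding f(2) Cs(3) C_def using Cs(1) by (intro SUP_least emeasure_mono) auto
  finally have "outer_measure_of \<mu> A \<le> emeasure \<mu> C" .
  moreover have "emeasure \<mu> C \<le> outer_measure_of \<mu> A"
    using outer_measure_of_mono[OF C(2), of \<mu>] C(1) by simp
  ultimately show thesis using that C by (simp add: antisym)
qed

lemma sets_completion_inner_outer:
  assumes "finite_measure \<mu>" and "A \<subseteq> space \<mu>"
    and inner: "\<And>r. r < outer_measure_of \<mu> A \<Longrightarrow> \<exists>C \<in> sets \<mu>. C \<subseteq> A \<and> r \<le> emeasure \<mu> C"
  shows "A \<in> sets (completion \<mu>)" and "emeasure (completion \<mu>) A = outer_measure_of \<mu> A"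
proof -
  obtain C where C: "C \<in> sets \<mu>" "C \<subseteq> A" "emeasure \<mu> C = outer_measure_of \<mu> A"
    using measurable_kernel_attain[OF inner] by blast
  obtain E where E: "E \<in> sets \<mu>" "A \<subseteq> E" "outer_measure_of \<mu> A = emeasure \<mu> E"
    using outer_measure_of_attain[OF assms(2)] by blast
  show A: "A \<in> sets (completion \<mu>)"
  proof (rule completion.complete_sets_sandwich)
    show "C \<in> sets (completion \<mu>)" "E \<in> sets (completion \<mu>)" using C(1) E(1) by auto
    show "C \<subseteq> A" "A \<subseteq> E" by fact+
    show "emeasure (completion \<mu>) C = emeasure (completion \<mu>) E" using C E by simp
    show "emeasure (completion \<mu>) C < \<infinity>"
      using C(1) finite_measure.emeasure_finite[OF assms(1)] by (simp add: less_top)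
  qed
  have "emeasure (completion \<mu>) C \<le> emeasure (completion \<mu>) A"
    by (rule emeasure_mono[OF C(2) A])
  moreover have "emeasure (completion \<mu>) A \<le> emeasure (completion \<mu>) E"
    using E(1) by (intro emeasure_mono[OF E(2)]) simp
  ultimately show "emeasure (completion \<mu>) A = outer_measure_of \<mu> A"
    using C E by (simp add: antisym)
qed

lemma emeasure_completion_SUP_inner:
  assumes "finite_measure \<mu>" and "A \<subseteq> space \<mu>"
    and G: "\<And>D. D \<in> \<D> \<Longrightarrow> G D \<in> sets \<mu> \<and> G D \<subseteq> A"
    and inner: "\<And>r. r < outer_measure_of \<mu> A \<Longrightarrow> \<exists>D \<in> \<D>. r \<le> emeasure \<mu> (G D)"
  shows "A \<in> sets (completion \<mu>) \<and> emeasure (completion \<mu>) A = (SUP D \<in> \<D>. emeasure \<mu> (G D))"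
proof -
  have inner': "\<exists>C \<in> sets \<mu>. C \<subseteq> A \<and> r \<le> emeasure \<mu> C" if r: "r < outer_measure_of \<mu> A" for r
  proof -
    obtain D where "D \<in> \<D>" "r \<le> emeasure \<mu> (G D)" using inner[OF r] by blast
    then show ?thesis using G by blast
  qed
  have "emeasure \<mu> (G D) \<le> outer_measure_of \<mu> A" if "D \<in> \<D>" for D
    using outer_measure_of_mono[of "G D" A \<mu>] G[OF that] by simp
  then have "(SUP D \<in> \<D>. emeasure \<mu> (G D)) \<le> outer_measure_of \<mu> A" by (rule SUP_least)
  moreover have "outer_measure_of \<mu> A \<le> (SUP D \<in> \<D>. emeasure \<mu> (G D))"
  proof (rule dense_le)
    fix r assume "r < outer_measure_of \<mu> A"
    then obtain D where "D \<in> \<D>" "r \<le> emeasure \<mu> (G D)" using inner by blast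
    then show "r \<le> (SUP D \<in> \<D>. emeasure \<mu> (G D))" by (rule SUP_upper2)
  qed
  ultimately show ?thesis
    using sets_completion_inner_outer[OF assms(1,2) inner'] by simp
qed

lemma diffset_inner_compact:
  fixes \<mu> :: "'a::{topological_ab_group_add, t2_space} measure"
  assumes "K_analytic_via Y B" and sets: "sets \<mu> = sets borel"
    and outer: "\<And>K. compact K \<Longrightarrow> emeasure \<mu> K = (INF U \<in> {U. open U \<and> K \<subseteq> U}. emeasure \<mu> U)"
    and r: "r < outer_measure_of \<mu> (diffset m n B)"
  obtains D where "D \<subseteq> B" "compact D" "r \<le> emeasure \<mu> (diffset m n D)"
proof -
  obtain S f where Y: "Hausdorff_space Y" and S: "Ksd_set Y S"
    and f: "continuous_map (subtopology Y S) euclidean f" and B: "B = f ` S"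
    using assms(1) unfolding K_analytic_via_def by blast
  let ?I = "{..<m+n}"
  let ?Z = "product_topology (\<lambda>_. Y) ?I"
  let ?T = "PiE ?I (\<lambda>_. S)"
  let ?F = "\<lambda>x. diffset_sum m n (f \<circ> x)"
  have coord: "continuous_map (subtopology ?Z ?T) euclidean (\<lambda>x. f (x l))" if "l < m + n" for l
    using that by (intro continuous_map_PiE_component f) simp
  have Z: "Hausdorff_space ?Z" using Y by (simp add: Hausdorff_space_product_topology)
  have T: "Ksd_set ?Z ?T" by (rule Ksd_set_PiE[OF finite_lessThan S])
  have F: "continuous_map (subtopology ?Z ?T) euclidean ?F"
    using coord by (intro continuous_map_diffset_sum) (simp add: o_def)
  have r': "r < outer_measure_of \<mu> (?F ` ?T)"
    using r by (simp add: B diffset_image)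
  obtain L where L: "compactin ?Z L" "L \<subseteq> ?T" "r \<le> emeasure \<mu> (?F ` L)"
    by (rule Ksd_image_inner_compact[OF Z T F sets outer r'])
  define D where "D = (\<Union>l \<in> ?I. (\<lambda>x. f (x l)) ` L)"
  have "compact ((\<lambda>x. f (x l)) ` L)" if "l \<in> ?I" for l
    using image_compactin[OF _ coord, of L l] L(1,2) that by (simp add: compactin_subtopology)
  then have "compact D" unfolding D_def by (intro compact_UN) auto
  moreover have "D \<subseteq> B" unfolding D_def B using L(2) by (auto simp: PiE_iff)
  moreover have "?F ` L \<subseteq> diffset m n D"
  proof (intro image_subsetI diffset_sum_in_diffset)
    fix x l assume "x \<in> L" "l < m + n"
    then show "(f \<circ> x) l \<in> D" unfolding D_def o_def by (intro UN_I[of l] imageI) auto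
  qed
  then have "emeasure \<mu> (?F ` L) \<le> emeasure \<mu> (diffset m n D)"
    using compact_diffset[OF \<open>compact D\<close>] sets
    by (intro emeasure_mono) (simp_all add: borel_closed compact_imp_closed)
  ultimately show thesis using L(3) that by (meson order_trans)
qed

theorem lemma4p3:
  fixes \<mu> :: "('a::{topological_ab_group_add, t2_space}) measure"
    and B :: "'a set" and Y :: "'b topology" and m n :: nat
  assumes "compact (UNIV :: 'a set)"
    and "haar_prob \<mu>"
    and "K_analytic_via Y B"
  shows "diffset m n B \<in> sets (completion \<mu>) \<and>
         emeasure (completion \<mu>) (diffset m n B) =
           (SUP D \<in> {D. D \<subseteq> B \<and> compact D}. emeasure \<mu> (diffset m n D))"
proof -
  have space: "space \<mu> = UNIV" and sets: "sets \<mu> = sets borel" and "prob_space \<mu>"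
    and outer: "\<And>A. A \<in> sets borel \<Longrightarrow> emeasure \<mu> A = (INF U \<in> {U. open U \<and> A \<subseteq> U}. emeasure \<mu> U)"
    using assms(2) unfolding haar_prob_def by auto
  have outer_compact: "emeasure \<mu> K = (INF U \<in> {U. open U \<and> K \<subseteq> U}. emeasure \<mu> U)"
    if "compact K" for K
    by (rule outer[OF borel_closed[OF compact_imp_closed[OF that]]])
  have sets_diffset: "diffset m n D \<in> sets \<mu>" if "compact D" for D
    using compact_diffset[OF that] sets by (simp add: borel_closed compact_imp_closed)
  show ?thesis
  proof (rule emeasure_completion_SUP_inner)
    show "finite_measure \<mu>" using \<open>prob_space \<mu>\<close> by (rule prob_space.finite_measure)
    show "diffset m n B \<subseteq> space \<mu>" by (simp add: space)
    show "diffset m n D \<in> sets \<mu> \<and> diffset m n D \<subseteq> diffset m n B"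
      if "D \<in> {D. D \<subseteq> B \<and> compact D}" for D
      using that by (simp add: sets_diffset diffset_mono)
  next
    fix r assume r: "r < outer_measure_of \<mu> (diffset m n B)"
    obtain D where "D \<subseteq> B" "compact D" "r \<le> emeasure \<mu> (diffset m n D)"
      by (rule diffset_inner_compact[OF assms(3) sets outer_compact r])
    then show "\<exists>D \<in> {D. D \<subseteq> B \<and> compact D}. r \<le> emeasure \<mu> (diffset m n D)" by blast
  qed
qed

end
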